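(* Let $\Gamma$ be a semigroup with identity $e$, $V$ a finite-dimensional complex vector space, and $\rho:\Gamma\to\mathrm{End}(V)$ a reducible endomorphism action with $\rho(e)=\mathrm{Id}$ and generalized weights $\lambda_1,\dots,\lambda_k$. Then $\rho$ is expansive if and only if for each $i=1,\dots,k$ the image $\lambda_i(\Gamma)$ is an unbounded subset of $\mathbb C$.
   Context: A character of $\Gamma$ is a semigroup homomorphism $\lambda:\Gamma\to(\mathbb C,\cdot)$. An action $\rho:\Gamma\to\mathrm{End}(V)$ is reducible if there are characters $\lambda_1,\dots,\lambda_k$ and nontrivial $\rho(\Gamma)$-invariant subspaces $V_1,\dots,V_k$ with $V=V_1\oplus\cdots\oplus V_k$ such that for each $i$ there is a basis of $V_i$ with respect to which $\rho(\gamma)|_{V_i}-\lambda_i(\gamma)I$ is strictly upper triangular for all $\gamma\in\Gamma$; the $\lambda_i$ are the generalized weights. The action is expansive (on $V$ as an additive topological group) if there is a neighborhood $U$ of $0$ with $\bigcap_{\gamma}\rho(\gamma)^{-1}(U)=\{0\}$. *)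

theory Defs
  imports "HOL-Analysis.Analysis"
begin

text \<open>V = complex^'n (finite-dimensional complex vector space, dimension CARD('n));
  End(V) is represented by complex n x n matrices acting by (*v).
  Gamma is a semigroup with identity, i.e. a type of class monoid_mult (identity 1).\<close>

definition is_character :: "('g::monoid_mult \<Rightarrow> complex) \<Rightarrow> bool" where
  "is_character lam \<longleftrightarrow> (\<forall>g h. lam (g * h) = lam g * lam h)"

definition is_action :: "('g::monoid_mult \<Rightarrow> complex^'n^'n) \<Rightarrow> bool" where
  "is_action \<rho> \<longleftrightarrow> (\<forall>g h. \<rho> (g * h) = \<rho> g ** \<rho> h)"

text \<open>Reducible action with generalized weights lams = [lambda_1,...,lambda_k]:
  there are nontrivial invariant complex subspaces V_1..V_k with V their direct sum,
  and for each i a basis b_0..b_(m-1) of V_i w.r.t. which rho(g)|V_i - lambda_i(g) I is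
  strictly upper triangular, i.e. rho(g) b_j - lambda_i(g) b_j lies in span{b_0..b_(j-1)}.\<close>

definition reducible_with_weights ::
  "('g::monoid_mult \<Rightarrow> complex^'n^'n) \<Rightarrow> ('g \<Rightarrow> complex) list \<Rightarrow> bool" where
  "reducible_with_weights \<rho> lams \<longleftrightarrow>
     (\<exists>Vs :: (complex^'n) set list.
        length Vs = length lams \<and>
        (\<forall>i < length lams.
           is_character (lams ! i) \<and>
           vec.subspace (Vs ! i) \<and> Vs ! i \<noteq> {0} \<and>
           (\<forall>g. \<forall>v \<in> Vs ! i. \<rho> g *v v \<in> Vs ! i) \<and>
           (\<exists>(m::nat) (b :: nat \<Rightarrow> complex^'n).
              inj_on b {..<m} \<and> vec.independent (b ` {..<m}) \<and>
              vec.span (b ` {..<m}) = Vs ! i \<and>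
              (\<forall>g. \<forall>j < m. \<rho> g *v b j - (lams ! i) g *s b j \<in> vec.span (b ` {..<j})))) \<and>
        (\<forall>v :: complex^'n. \<exists>!f :: nat \<Rightarrow> complex^'n.
           (\<forall>i < length lams. f i \<in> Vs ! i) \<and> (\<forall>i \<ge> length lams. f i = 0) \<and>
           v = (\<Sum>i < length lams. f i)))"

definition expansive :: "('g \<Rightarrow> complex^'n^'n) \<Rightarrow> bool" where
  "expansive \<rho> \<longleftrightarrow>
     (\<exists>U :: (complex^'n) set. 0 \<in> interior U \<and>
        (\<Inter>g. (\<lambda>v. \<rho> g *v v) -` U) = {0})"

end

theory Submission
  imports Defs
begin

text \<open>If a weight \<open>\<lambda>\<^sub>i\<close> is bounded, the first vector of the triangular basis of \<open>V\<^sub>i\<close> is a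
  common eigenvector with bounded orbit, so no neighbourhood of 0 separates it from 0.
  Conversely, write a nonzero \<open>v \<in> V\<^sub>i\<close> as \<open>c b\<^sub>j\<close> plus lower terms of the flag with \<open>c \<noteq> 0\<close>; since
  \<open>\<rho>(g)\<close> acts on \<open>b\<^sub>j\<close> as \<open>\<lambda>\<^sub>i(g)\<close> modulo the lower flag,
  \<open>\<parallel>\<rho>(g) v\<parallel> \<ge> |c| |\<lambda>\<^sub>i(g)| dist(b\<^sub>j, span{b\<^sub>0, \<dots>, b\<^sub>j\<^sub>-\<^sub>1})\<close>, so unbounded weights give
  unbounded orbits. The projections onto the blocks are linear and commute with \<open>\<rho>\<close>, hence
  every nonzero vector has an unbounded orbit, which is expansivity with the unit ball as
  neighbourhood.\<close>

lemma norm_vec_smult: "norm (c *s (x::'a::real_normed_div_algebra^'n)) = norm c * norm x"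
  by (simp add: norm_vec_def L2_set_right_distrib norm_mult)

lemma scaleR_eq_vec_smult: "r *\<^sub>R (x::'a::real_algebra_1^'n) = (of_real r :: 'a) *s x"
  by (simp add: vec_eq_iff of_real_def)

lemma subspace_if_vec_subspace:
  "vec.subspace S \<Longrightarrow> subspace (S::('a::{real_algebra_1,field}^'n) set)"
  unfolding subspace_def vec.subspace_def by (simp add: scaleR_eq_vec_smult)

lemma closed_vec_span: "closed (vec.span (S::(complex^'n) set))"
  by (intro closed_subspace subspace_if_vec_subspace vec.subspace_span)

definition triangular_basis ::
  "('g \<Rightarrow> complex^'n^'n) \<Rightarrow> ('g \<Rightarrow> complex) \<Rightarrow> (nat \<Rightarrow> complex^'n) \<Rightarrow> nat \<Rightarrow> bool" where
  "triangular_basis \<rho> lam b m \<longleftrightarrow>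
     (\<forall>g. \<forall>j < m. \<rho> g *v b j - lam g *s b j \<in> vec.span (b ` {..<j}))"

lemma triangular_basis_span_invariant:
  assumes tri: "triangular_basis \<rho> lam b m" and "k \<le> m" and x: "x \<in> vec.span (b ` {..<k})"
  shows "\<rho> g *v x \<in> vec.span (b ` {..<k})"
proof -
  have "b l \<in> (*v) (\<rho> g) -` vec.span (b ` {..<k})" if "l < k" for l
  proof -
    have "\<rho> g *v b l - lam g *s b l \<in> vec.span (b ` {..<l})"
      using tri that \<open>k \<le> m\<close> unfolding triangular_basis_def by auto
    also have "\<dots> \<subseteq> vec.span (b ` {..<k})"
      using that by (intro vec.span_mono) auto
    finally have "\<rho> g *v b l - lam g *s b l \<in> vec.span (b ` {..<k})" .
    moreover have "lam g *s b l \<in> vec.span (b ` {..<k})"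
      using that by (intro vec.span_scale vec.span_base) auto
    ultimately have "(\<rho> g *v b l - lam g *s b l) + lam g *s b l \<in> vec.span (b ` {..<k})"
      by (rule vec.span_add)
    then show ?thesis by simp
  qed
  moreover have "vec.subspace ((*v) (\<rho> g) -` vec.span (b ` {..<k}))"
    by (rule vec.subspace_vimage[OF vec.subspace_span])
  ultimately have "vec.span (b ` {..<k}) \<subseteq> (*v) (\<rho> g) -` vec.span (b ` {..<k})"
    by (intro vec.span_minimal) auto
  then show ?thesis using x by auto
qed

lemma triangular_basis_leading_term:
  assumes "triangular_basis \<rho> lam b m" and "j < m" and "v - c *s b j \<in> vec.span (b ` {..<j})"
  shows "\<rho> g *v v - (c * lam g) *s b j \<in> vec.span (b ` {..<j})"
proof -
  have "\<rho> g *v v - (c * lam g) *s b j =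
      c *s (\<rho> g *v b j - lam g *s b j) + \<rho> g *v (v - c *s b j)"
    by (simp add: matrix_vector_mult_diff_distrib vec.linear_scale[OF matrix_vector_mul_linear_gen])
  also have "\<dots> \<in> vec.span (b ` {..<j})"
    using assms triangular_basis_span_invariant[of \<rho> lam b m j "v - c *s b j" g]
    unfolding triangular_basis_def by (intro vec.span_add vec.span_scale) auto
  finally show ?thesis .
qed

lemma span_prefix_leading_term:
  fixes b :: "nat \<Rightarrow> 'a::field^'n"
  assumes "v \<noteq> 0"
  shows "v \<in> vec.span (b ` {..<m}) \<Longrightarrow>
    \<exists>j < m. \<exists>c. c \<noteq> 0 \<and> v - c *s b j \<in> vec.span (b ` {..<j})"
proof (induction m)
  case 0
  then show ?case using assms by simp
next
  case (Suc m)
  then obtain c where c: "v - c *s b m \<in> vec.span (b ` {..<m})"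
    by (auto simp: lessThan_Suc vec.span_breakdown_eq)
  show ?case
  proof (cases "c = 0")
    case True
    then show ?thesis using Suc.IH c by (auto intro: less_SucI)
  next
    case False
    then show ?thesis using c by blast
  qed
qed

lemma independent_notin_span_prefix:
  fixes b :: "nat \<Rightarrow> 'a::field^'n"
  assumes "inj_on b {..<m}" and "vec.independent (b ` {..<m})" and "j < m"
  shows "b j \<notin> vec.span (b ` {..<j})"
proof
  assume "b j \<in> vec.span (b ` {..<j})"
  moreover have "b ` {..<j} \<subseteq> b ` {..<m} - {b j}"
    using assms by (auto simp: inj_on_def)
  ultimately have "b j \<in> vec.span (b ` {..<m} - {b j})"
    using vec.span_mono by blast
  then show False
    using assms unfolding vec.dependent_def by blast
qed

lemma norm_ge_infdist_smult:
  assumes "vec.subspace S" and "v - c *s b \<in> S"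
  shows "norm c * infdist b S \<le> norm (v :: complex^'n)"
proof (cases "c = 0")
  case True
  then show ?thesis by simp
next
  case False
  have "- inverse c *s (v - c *s b) \<in> S"
    using assms by (rule vec.subspace_scale)
  moreover have "- inverse c *s (v - c *s b) = b - inverse c *s v"
    using False by simp
  ultimately have "b - inverse c *s v \<in> S"
    by simp
  then have "infdist b S \<le> norm (inverse c *s v)"
    using infdist_le[of "b - inverse c *s v" S b] by (simp add: dist_norm)
  also have "\<dots> = norm v / norm c"
    by (simp add: norm_vec_smult norm_inverse divide_inverse mult.commute)
  finally show ?thesis
    using False by (simp add: field_simps)
qed

lemma triangular_basis_unbounded_orbit:
  assumes "inj_on b {..<m}" and "vec.independent (b ` {..<m})"
    and tri: "triangular_basis \<rho> lam b m"
    and "v \<in> vec.span (b ` {..<m})" and "v \<noteq> 0"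
    and "\<not> bounded (range lam)"
  shows "\<not> bounded (range (\<lambda>g. \<rho> g *v v))"
proof
  assume "bounded (range (\<lambda>g. \<rho> g *v v))"
  then obtain B where B: "\<And>g. norm (\<rho> g *v v) \<le> B"
    by (auto simp: bounded_iff)
  obtain j c where "j < m" and "c \<noteq> 0" and lead: "v - c *s b j \<in> vec.span (b ` {..<j})"
    using span_prefix_leading_term[OF \<open>v \<noteq> 0\<close> \<open>v \<in> vec.span (b ` {..<m})\<close>] by blast
  define \<delta> where "\<delta> = infdist (b j) (vec.span (b ` {..<j}))"
  have "b j \<notin> vec.span (b ` {..<j})"
    using assms(1,2) \<open>j < m\<close> by (rule independent_notin_span_prefix)
  moreover have "vec.span (b ` {..<j}) \<noteq> {}"
    using vec.span_zero by blast
  ultimately have "\<delta> \<noteq> 0"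
    unfolding \<delta>_def using in_closed_iff_infdist_zero[OF closed_vec_span] by blast
  then have "\<delta> > 0"
    unfolding \<delta>_def using infdist_nonneg by (simp add: order_less_le)
  have "norm (lam g) \<le> B / (norm c * \<delta>)" for g
  proof -
    have "\<rho> g *v v - (c * lam g) *s b j \<in> vec.span (b ` {..<j})"
      using tri \<open>j < m\<close> lead by (rule triangular_basis_leading_term)
    then have "norm (c * lam g) * \<delta> \<le> norm (\<rho> g *v v)"
      unfolding \<delta>_def by (rule norm_ge_infdist_smult[OF vec.subspace_span])
    then have "norm (lam g) * (norm c * \<delta>) \<le> B"
      using B[of g] by (simp add: norm_mult algebra_simps)
    then show ?thesis
      using \<open>c \<noteq> 0\<close> \<open>\<delta> > 0\<close> by (simp add: field_simps)
  qed
  then have "bounded (range lam)"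
    by (auto simp: bounded_iff)
  with assms(6) show False ..
qed

lemma triangular_basis_bounded_orbit:
  assumes "triangular_basis \<rho> lam b m" and "0 < m" and "bounded (range lam)"
  shows "bounded (range (\<lambda>g. \<rho> g *v b 0))"
proof -
  obtain M where M: "\<And>g. norm (lam g) \<le> M"
    using assms(3) by (auto simp: bounded_iff)
  have "\<rho> g *v b 0 = lam g *s b 0" for g
    using assms(1,2) unfolding triangular_basis_def by force
  then have "norm (\<rho> g *v b 0) \<le> M * norm (b 0)" for g
    using M[of g] by (simp add: norm_vec_smult mult_right_mono)
  then show ?thesis
    by (auto simp: bounded_iff)
qed

lemma expansive_iff_unbounded_orbits:
  fixes \<rho> :: "'g \<Rightarrow> complex^'n^'n"
  shows "expansive \<rho> \<longleftrightarrow> (\<forall>v. v \<noteq> 0 \<longrightarrow> \<not> bounded (range (\<lambda>g. \<rho> g *v v)))"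
proof
  assume "expansive \<rho>"
  then obtain U r where "r > 0" "ball 0 r \<subseteq> U" and U: "(\<Inter>g. (\<lambda>v. \<rho> g *v v) -` U) = {0}"
    unfolding expansive_def by (meson mem_interior)
  show "\<forall>v. v \<noteq> 0 \<longrightarrow> \<not> bounded (range (\<lambda>g. \<rho> g *v v))"
  proof (intro allI impI notI)
    fix v :: "complex^'n"
    assume "v \<noteq> 0" and "bounded (range (\<lambda>g. \<rho> g *v v))"
    then obtain B where "B > 0" and B: "\<And>g. norm (\<rho> g *v v) \<le> B"
      by (auto simp: bounded_pos)
    define x where "x = (r / (2 * B)) *\<^sub>R v"
    have "norm (\<rho> g *v x) < r" for g
    proof -
      have "norm (\<rho> g *v x) = r / (2 * B) * norm (\<rho> g *v v)"
        using \<open>r > 0\<close> \<open>B > 0\<close> by (simp add: x_def linear_scale)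
      also have "\<dots> \<le> r / 2"
        using B[of g] \<open>r > 0\<close> \<open>B > 0\<close> by (simp add: field_simps)
      finally show ?thesis
        using \<open>r > 0\<close> by simp
    qed
    then have "x \<in> (\<Inter>g. (\<lambda>v. \<rho> g *v v) -` U)"
      using \<open>ball 0 r \<subseteq> U\<close> by auto
    moreover have "x \<noteq> 0"
      using \<open>v \<noteq> 0\<close> \<open>r > 0\<close> \<open>B > 0\<close> by (simp add: x_def)
    ultimately show False
      using U by simp
  qed
next
  assume unbounded: "\<forall>v. v \<noteq> 0 \<longrightarrow> \<not> bounded (range (\<lambda>g. \<rho> g *v v))"
  have "(\<Inter>g. (\<lambda>v. \<rho> g *v v) -` ball 0 1) = {0}"
  proof safe
    fix v assume "v \<in> (\<Inter>g. (\<lambda>v. \<rho> g *v v) -` ball 0 1)"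
    then have "range (\<lambda>g. \<rho> g *v v) \<subseteq> ball 0 1"
      by auto
    then have "bounded (range (\<lambda>g. \<rho> g *v v))"
      using bounded_ball bounded_subset by blast
    with unbounded show "v = 0" by blast
  qed auto
  then show "expansive \<rho>"
    unfolding expansive_def by (intro exI[of _ "ball 0 1"]) simp
qed

definition is_decomposition :: "'v::comm_monoid_add set list \<Rightarrow> 'v \<Rightarrow> (nat \<Rightarrow> 'v) \<Rightarrow> bool" where
  "is_decomposition Vs v f \<longleftrightarrow>
     (\<forall>i < length Vs. f i \<in> Vs ! i) \<and> (\<forall>i \<ge> length Vs. f i = 0) \<and> v = (\<Sum>i < length Vs. f i)"

definition is_direct_sum :: "'v::real_vector set list \<Rightarrow> bool" where
  "is_direct_sum Vs \<longleftrightarrow>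
     (\<forall>i < length Vs. subspace (Vs ! i)) \<and> (\<forall>v. \<exists>!f. is_decomposition Vs v f)"

definition component :: "'v::comm_monoid_add set list \<Rightarrow> 'v \<Rightarrow> nat \<Rightarrow> 'v" where
  "component Vs v = (THE f. is_decomposition Vs v f)"

lemma unique_decomposition:
  "is_direct_sum Vs \<Longrightarrow> \<exists>!f. is_decomposition Vs v f"
  by (simp add: is_direct_sum_def)

lemma is_decomposition_component:
  "is_direct_sum Vs \<Longrightarrow> is_decomposition Vs v (component Vs v)"
  unfolding component_def by (rule theI'[OF unique_decomposition])

lemma component_eqI:
  "is_direct_sum Vs \<Longrightarrow> is_decomposition Vs v f \<Longrightarrow> component Vs v = f"
  unfolding component_def by (rule the1_equality[OF unique_decomposition])

lemma linear_component:
  fixes Vs :: "'v::real_vector set list"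
  assumes "is_direct_sum Vs"
  shows "linear (\<lambda>v. component Vs v i)"
proof (rule linearI)
  have sub: "subspace (Vs ! i)" if "i < length Vs" for i
    using assms that unfolding is_direct_sum_def by blast
  note dec = is_decomposition_component[OF assms]
  fix x y :: 'v and r :: real
  have "is_decomposition Vs (x + y) (\<lambda>k. component Vs x k + component Vs y k)"
    using dec[of x] dec[of y] sub unfolding is_decomposition_def
    by (auto simp: sum.distrib intro: subspace_add)
  then show "component Vs (x + y) i = component Vs x i + component Vs y i"
    by (simp add: component_eqI[OF assms])
  have "r *\<^sub>R x = (\<Sum>k < length Vs. r *\<^sub>R component Vs x k)"
    using dec[of x] unfolding is_decomposition_def by (metis scaleR_sum_right)
  then have "is_decomposition Vs (r *\<^sub>R x) (\<lambda>k. r *\<^sub>R component Vs x k)"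
    using dec[of x] sub unfolding is_decomposition_def by (auto intro: subspace_scale)
  then show "component Vs (r *\<^sub>R x) i = r *\<^sub>R component Vs x i"
    by (simp add: component_eqI[OF assms])
qed

lemma component_linear_image:
  assumes "is_direct_sum Vs" and "linear A" and "\<And>i. i < length Vs \<Longrightarrow> A ` (Vs ! i) \<subseteq> Vs ! i"
  shows "component Vs (A v) = (\<lambda>i. A (component Vs v i))"
proof (rule component_eqI[OF assms(1)])
  have dec: "is_decomposition Vs v (component Vs v)"
    using assms(1) by (rule is_decomposition_component)
  then have "A v = (\<Sum>i < length Vs. A (component Vs v i))"
    unfolding is_decomposition_def by (metis linear_sum[OF assms(2)])
  with dec assms(3) show "is_decomposition Vs (A v) (\<lambda>i. A (component Vs v i))"
    unfolding is_decomposition_def by (auto simp: linear_0[OF assms(2)])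
qed

lemma component_nonzero:
  assumes "is_direct_sum Vs" and "v \<noteq> 0"
  shows "\<exists>i < length Vs. component Vs v i \<noteq> 0"
proof (rule ccontr)
  assume "\<not> ?thesis"
  then have "(\<Sum>i < length Vs. component Vs v i) = 0"
    by simp
  then show False
    using is_decomposition_component[OF assms(1), of v] assms(2)
    unfolding is_decomposition_def by simp
qed

lemma bounded_orbit_component:
  fixes A :: "'g \<Rightarrow> 'v::euclidean_space \<Rightarrow> 'v"
  assumes "is_direct_sum Vs" and "\<And>g. linear (A g)"
    and "\<And>g i. i < length Vs \<Longrightarrow> A g ` (Vs ! i) \<subseteq> Vs ! i"
    and "bounded (range (\<lambda>g. A g v))"
  shows "bounded (range (\<lambda>g. A g (component Vs v i)))"
proof -
  have "bounded_linear (\<lambda>x. component Vs x i)"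
    using linear_component[OF assms(1)] by (simp add: linear_conv_bounded_linear)
  then obtain K where "K > 0" and K: "\<And>x. norm (component Vs x i) \<le> norm x * K"
    using bounded_linear.pos_bounded by blast
  obtain B where B: "\<And>g. norm (A g v) \<le> B"
    using assms(4) by (auto simp: bounded_iff)
  have "norm (A g (component Vs v i)) \<le> B * K" for g
  proof -
    have "norm (A g (component Vs v i)) = norm (component Vs (A g v) i)"
      by (simp add: component_linear_image[OF assms(1,2,3)])
    also have "\<dots> \<le> norm (A g v) * K"
      by (rule K)
    also have "\<dots> \<le> B * K"
      using B[of g] \<open>K > 0\<close> by (rule mult_right_mono[OF _ less_imp_le])
    finally show ?thesis .
  qed
  then show ?thesis
    by (auto simp: bounded_iff)
qed

lemma reducible_with_weightsE:
  fixes \<rho> :: "'g::monoid_mult \<Rightarrow> complex^'n^'n"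
  assumes "reducible_with_weights \<rho> lams"
  obtains Vs where "length Vs = length lams" and "is_direct_sum Vs"
    and "\<forall>g. \<forall>i < length Vs. (*v) (\<rho> g) ` (Vs ! i) \<subseteq> Vs ! i"
    and "\<forall>i < length Vs. \<exists>m b. 0 < m \<and> inj_on b {..<m} \<and> vec.independent (b ` {..<m}) \<and>
           vec.span (b ` {..<m}) = Vs ! i \<and> triangular_basis \<rho> (lams ! i) b m"
proof -
  from assms obtain Vs :: "(complex^'n) set list" where
    len: "length Vs = length lams" and
    blocks: "\<forall>i < length lams.
       is_character (lams ! i) \<and> vec.subspace (Vs ! i) \<and> Vs ! i \<noteq> {0} \<and>
       (\<forall>g. \<forall>v \<in> Vs ! i. \<rho> g *v v \<in> Vs ! i) \<and>
       (\<exists>m b. inj_on b {..<m} \<and> vec.independent (b ` {..<m}) \<and>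
          vec.span (b ` {..<m}) = Vs ! i \<and> triangular_basis \<rho> (lams ! i) b m)" and
    unique: "\<forall>v. \<exists>!f. is_decomposition Vs v f"
    unfolding reducible_with_weights_def triangular_basis_def is_decomposition_def by auto
  have "is_direct_sum Vs"
    using len blocks unique unfolding is_direct_sum_def by (auto intro: subspace_if_vec_subspace)
  moreover have "\<forall>g. \<forall>i < length Vs. (*v) (\<rho> g) ` (Vs ! i) \<subseteq> Vs ! i"
    using len blocks by auto
  moreover have "\<forall>i < length Vs. \<exists>m b. 0 < m \<and> inj_on b {..<m} \<and> vec.independent (b ` {..<m}) \<and>
      vec.span (b ` {..<m}) = Vs ! i \<and> triangular_basis \<rho> (lams ! i) b m"
    using len blocks by (metis gr0I lessThan_0 image_empty vec.span_empty)
  ultimately show thesis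
    by (rule that[OF len])
qed

lemma reducible_bounded_orbit:
  fixes \<rho> :: "'g::monoid_mult \<Rightarrow> complex^'n^'n"
  assumes "reducible_with_weights \<rho> lams" and "i < length lams" and "bounded (range (lams ! i))"
  obtains v where "v \<noteq> 0" and "bounded (range (\<lambda>g. \<rho> g *v v))"
proof -
  obtain Vs :: "(complex^'n) set list" where "length Vs = length lams"
    and basis: "\<forall>i < length Vs. \<exists>m b. 0 < m \<and> inj_on b {..<m} \<and> vec.independent (b ` {..<m}) \<and>
      vec.span (b ` {..<m}) = Vs ! i \<and> triangular_basis \<rho> (lams ! i) b m"
    using assms(1) by (rule reducible_with_weightsE)
  then obtain m b where "0 < m" and "vec.independent (b ` {..<m})"
    and "triangular_basis \<rho> (lams ! i) b m"
    using assms(2) by auto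
  then have "b 0 \<noteq> 0"
    using vec.dependent_zero by (metis imageI lessThan_iff)
  moreover have "bounded (range (\<lambda>g. \<rho> g *v b 0))"
    using \<open>triangular_basis \<rho> (lams ! i) b m\<close> \<open>0 < m\<close> assms(3)
    by (rule triangular_basis_bounded_orbit)
  ultimately show thesis
    by (rule that)
qed

lemma reducible_unbounded_orbit:
  fixes \<rho> :: "'g::monoid_mult \<Rightarrow> complex^'n^'n"
  assumes "reducible_with_weights \<rho> lams" and "\<forall>i < length lams. \<not> bounded (range (lams ! i))"
    and "v \<noteq> 0"
  shows "\<not> bounded (range (\<lambda>g. \<rho> g *v v))"
proof
  assume "bounded (range (\<lambda>g. \<rho> g *v v))"
  obtain Vs :: "(complex^'n) set list" where len: "length Vs = length lams" and ds: "is_direct_sum Vs"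
    and inv: "\<forall>g. \<forall>i < length Vs. (*v) (\<rho> g) ` (Vs ! i) \<subseteq> Vs ! i"
    and basis: "\<forall>i < length Vs. \<exists>m b. 0 < m \<and> inj_on b {..<m} \<and> vec.independent (b ` {..<m}) \<and>
      vec.span (b ` {..<m}) = Vs ! i \<and> triangular_basis \<rho> (lams ! i) b m"
    using assms(1) by (rule reducible_with_weightsE)
  obtain i where "i < length Vs" and "component Vs v i \<noteq> 0"
    using component_nonzero[OF ds \<open>v \<noteq> 0\<close>] by blast
  then obtain m b where "inj_on b {..<m}" and "vec.independent (b ` {..<m})"
    and "vec.span (b ` {..<m}) = Vs ! i" and "triangular_basis \<rho> (lams ! i) b m"
    using basis by blast
  moreover have "component Vs v i \<in> Vs ! i"
    using is_decomposition_component[OF ds] \<open>i < length Vs\<close> unfolding is_decomposition_def by blast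
  moreover have "\<not> bounded (range (lams ! i))"
    using assms(2) len \<open>i < length Vs\<close> by simp
  ultimately have "\<not> bounded (range (\<lambda>g. \<rho> g *v component Vs v i))"
    using \<open>component Vs v i \<noteq> 0\<close> triangular_basis_unbounded_orbit by blast
  moreover have "bounded (range (\<lambda>g. \<rho> g *v component Vs v i))"
    using ds matrix_vector_mul_linear inv[rule_format] \<open>bounded (range (\<lambda>g. \<rho> g *v v))\<close>
    by (rule bounded_orbit_component)
  ultimately show False
    by blast
qed

theorem proposition2p3:
  fixes \<rho> :: "'g::monoid_mult \<Rightarrow> complex^'n^'n"
    and lams :: "('g \<Rightarrow> complex) list"
  assumes "is_action \<rho>"
    and "\<rho> 1 = mat 1"
    and "reducible_with_weights \<rho> lams"
  shows "expansive \<rho> \<longleftrightarrow> (\<forall>i < length lams. \<not> bounded (range (lams ! i)))"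
proof -
  have "(\<forall>v. v \<noteq> 0 \<longrightarrow> \<not> bounded (range (\<lambda>g. \<rho> g *v v))) \<longleftrightarrow>
      (\<forall>i < length lams. \<not> bounded (range (lams ! i)))"
  proof (intro iffI allI impI)
    fix i assume "\<forall>v. v \<noteq> 0 \<longrightarrow> \<not> bounded (range (\<lambda>g. \<rho> g *v v))" and "i < length lams"
    then show "\<not> bounded (range (lams ! i))"
      using reducible_bounded_orbit[OF assms(3)] by metis
  next
    fix v :: "complex^'n"
    assume "\<forall>i < length lams. \<not> bounded (range (lams ! i))" and "v \<noteq> 0"
    then show "\<not> bounded (range (\<lambda>g. \<rho> g *v v))"
      by (rule reducible_unbounded_orbit[OF assms(3)])
  qed
  then show ?thesis
    by (simp add: expansive_iff_unbounded_orbits)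
qed

end
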